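(* Let $\mathcal{D}$ be the class of all finite digraphs and let $D\in\mathcal{D}$. The class $\mathrm{Av}(D)=\{E\in\mathcal{D}: D\not\preceq E\}$, with respect to the homomorphic image ordering $\preceq$, is well quasi-ordered if and only if $D$ is isomorphic to the complete digraph $\overrightarrow{K}_n$ for some $n\ge1$; in that case $\mathrm{Av}(D)$ is finite.
   Context: A digraph is a set $D$ with a binary relation $E(D)\subseteq D\times D$ (loops allowed). $\overrightarrow{K}_n$ is the digraph on $\{1,\dots,n\}$ with edge set $\{(i,j):1\le i,j\le n\}$ (all ordered pairs, including loops). A homomorphism maps edges to edges. Homomorphic image ordering: $A\preceq B$ iff there is a surjective homomorphism $B\to A$. Well quasi-ordered means no infinite strictly decreasing sequence and no infinite antichain; digraphs considered up to isomorphism. *)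

theory Defs
  imports Main
begin

text \<open>A digraph is a pair (vertex set, edge relation); loops allowed.\<close>
type_synonym 'a digraph = "'a set \<times> ('a \<times> 'a) set"

definition verts :: "'a digraph \<Rightarrow> 'a set" where "verts G = fst G"
definition arcs :: "'a digraph \<Rightarrow> ('a \<times> 'a) set" where "arcs G = snd G"

definition finite_digraph :: "'a digraph \<Rightarrow> bool" where
  "finite_digraph G \<longleftrightarrow> finite (verts G) \<and> arcs G \<subseteq> verts G \<times> verts G"

definition dhom :: "('a \<Rightarrow> 'b) \<Rightarrow> 'a digraph \<Rightarrow> 'b digraph \<Rightarrow> bool" where
  "dhom f G H \<longleftrightarrow> (\<forall>x\<in>verts G. f x \<in> verts H) \<and>
     (\<forall>x y. (x, y) \<in> arcs G \<longrightarrow> (f x, f y) \<in> arcs H)"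

definition himg_le :: "'a digraph \<Rightarrow> 'b digraph \<Rightarrow> bool" where
  "himg_le A B \<longleftrightarrow> (\<exists>f. dhom f B A \<and> f ` verts B = verts A)"

definition diso :: "'a digraph \<Rightarrow> 'b digraph \<Rightarrow> bool" where
  "diso G H \<longleftrightarrow> (\<exists>f. bij_betw f (verts G) (verts H) \<and>
     (\<forall>x\<in>verts G. \<forall>y\<in>verts G. (x, y) \<in> arcs G \<longleftrightarrow> (f x, f y) \<in> arcs H))"

definition complete_digraph :: "nat \<Rightarrow> nat digraph" where
  "complete_digraph n = ({1..n}, {1..n} \<times> {1..n})"

text \<open>Every finite digraph is isomorphic to one with vertices in nat, so the class of all
  finite digraphs is represented by the finite digraphs on nat.\<close>
definition Av :: "'a digraph \<Rightarrow> nat digraph set" where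
  "Av D = {E. finite_digraph E \<and> \<not> himg_le D E}"

definition wqo_class :: "('b \<Rightarrow> 'b \<Rightarrow> bool) \<Rightarrow> 'b set \<Rightarrow> bool" where
  "wqo_class le S \<longleftrightarrow>
     \<not> (\<exists>s::nat \<Rightarrow> 'b. (\<forall>i. s i \<in> S) \<and> (\<forall>i. le (s (Suc i)) (s i) \<and> \<not> le (s i) (s (Suc i)))) \<and>
     \<not> (\<exists>s::nat \<Rightarrow> 'b. (\<forall>i. s i \<in> S) \<and> (\<forall>i j. i \<noteq> j \<longrightarrow> \<not> le (s i) (s j)))"

definition finite_upto_iso :: "nat digraph set \<Rightarrow> bool" where
  "finite_upto_iso S \<longleftrightarrow> (\<exists>F :: nat digraph set. finite F \<and> (\<forall>E\<in>S. \<exists>G\<in>F. diso E G))"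

end

theory Submission imports Defs begin

text \<open>Every map onto a complete digraph \<open>K\<close> is a homomorphism, so a finite digraph avoids \<open>K\<close>
  exactly when it has fewer vertices than \<open>K\<close>. Then \<open>Av K\<close> is finite up to isomorphism, and by
  the pigeonhole principle every infinite sequence in it has two isomorphic, hence comparable,
  terms. If \<open>D\<close> is not complete, it is empty or has a missing arc \<open>x \<rightarrow> y\<close>. When \<open>x \<noteq> y\<close> (or
  \<open>D\<close> is empty), the loopless complete digraphs avoid \<open>D\<close>, since all their homomorphic images
  have every arc between distinct vertices; when \<open>x = y\<close>, the complements of directed cycles
  avoid \<open>D\<close>, since all their images have every loop. In both families surjective homomorphisms
  are injective, so each family is an infinite antichain.\<close>

section \<open>The homomorphic image order and isomorphism\<close>

lemma himg_le_refl: "himg_le A A"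
  unfolding himg_le_def dhom_def by (rule exI[of _ id]) simp

lemma himg_le_trans:
  assumes "himg_le A B" and "himg_le B C"
  shows "himg_le A C"
proof -
  obtain f g where "dhom f B A" "f ` verts B = verts A" "dhom g C B" "g ` verts C = verts B"
    using assms unfolding himg_le_def by blast
  then have "dhom (f \<circ> g) C A" "(f \<circ> g) ` verts C = verts A"
    unfolding dhom_def image_comp[symmetric] by auto
  then show ?thesis
    unfolding himg_le_def by blast
qed

lemma diso_imp_himg_le:
  assumes "diso E G" and "arcs E \<subseteq> verts E \<times> verts E"
  shows "himg_le G E"
proof -
  obtain f where bij: "bij_betw f (verts E) (verts G)"
    and arcs_iff: "\<forall>x\<in>verts E. \<forall>y\<in>verts E. (x, y) \<in> arcs E \<longleftrightarrow> (f x, f y) \<in> arcs G"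
    using assms(1) unfolding diso_def by blast
  have "dhom f E G"
    unfolding dhom_def using bij_betwE[OF bij] arcs_iff assms(2) by blast
  with bij show ?thesis
    unfolding himg_le_def bij_betw_def by blast
qed

lemma diso_trans_converse:
  assumes "diso E G" and "diso E' G"
  shows "diso E E'"
proof -
  obtain f where f: "bij_betw f (verts E) (verts G)"
    and f_arcs: "\<forall>x\<in>verts E. \<forall>y\<in>verts E. (x, y) \<in> arcs E \<longleftrightarrow> (f x, f y) \<in> arcs G"
    using assms(1) unfolding diso_def by blast
  obtain f' where f': "bij_betw f' (verts E') (verts G)"
    and f'_arcs: "\<forall>x\<in>verts E'. \<forall>y\<in>verts E'. (x, y) \<in> arcs E' \<longleftrightarrow> (f' x, f' y) \<in> arcs G"
    using assms(2) unfolding diso_def by blast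
  define h where "h = inv_into (verts E') f' \<circ> f"
  have h: "bij_betw h (verts E) (verts E')"
    unfolding h_def using f bij_betw_inv_into[OF f'] by (rule bij_betw_trans)
  have "f' (h x) = f x" if "x \<in> verts E" for x
    unfolding h_def using that bij_betwE[OF f] bij_betw_inv_into_right[OF f'] by simp
  with f_arcs f'_arcs bij_betwE[OF h] have "\<forall>x\<in>verts E. \<forall>y\<in>verts E.
      (x, y) \<in> arcs E \<longleftrightarrow> (h x, h y) \<in> arcs E'"
    by metis
  with h show ?thesis
    unfolding diso_def by blast
qed

lemma diso_image_digraph:
  assumes "arcs E \<subseteq> verts E \<times> verts E" and bij: "bij_betw h (verts E) V"
  shows "diso E (V, map_prod h h ` arcs E)"
  unfolding diso_def
proof (intro exI[of _ h] conjI ballI)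
  show "bij_betw h (verts E) (verts (V, map_prod h h ` arcs E))"
    using bij by (simp add: verts_def)
  fix x y assume x: "x \<in> verts E" and y: "y \<in> verts E"
  have "(x, y) \<in> arcs E" if "(a, b) \<in> arcs E" "h a = h x" "h b = h y" for a b
  proof -
    have "inj_on h (verts E)"
      using bij by (simp add: bij_betw_def)
    with that x y assms(1) have "a = x" "b = y"
      by (auto dest: inj_onD)
    with that show ?thesis by simp
  qed
  then show "(x, y) \<in> arcs E \<longleftrightarrow> (h x, h y) \<in> arcs (V, map_prod h h ` arcs E)"
    by (force simp: arcs_def)
qed

lemma diso_standard_copy:
  assumes "finite_digraph E"
  obtains G where "verts G = {0..<card (verts E)}" "arcs G \<subseteq> verts G \<times> verts G" "diso E G"
proof -
  have fin: "finite (verts E)" and wf: "arcs E \<subseteq> verts E \<times> verts E"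
    using assms by (auto simp: finite_digraph_def)
  obtain h where h: "bij_betw h (verts E) {0..<card (verts E)}"
    using finite_same_card_bij[OF fin finite_atLeastLessThan] by force
  let ?G = "({0..<card (verts E)}, map_prod h h ` arcs E)"
  show thesis
  proof (rule that)
    show "verts ?G = {0..<card (verts E)}"
      by (simp add: verts_def)
    show "arcs ?G \<subseteq> verts ?G \<times> verts ?G"
      using wf bij_betwE[OF h] by (auto simp: verts_def arcs_def)
    show "diso E ?G"
      by (rule diso_image_digraph[OF wf h])
  qed
qed

section \<open>Well quasi-orders\<close>

lemma wqo_class_if_good:
  assumes refl: "\<And>x. le x x" and trans: "\<And>x y z. le x y \<Longrightarrow> le y z \<Longrightarrow> le x z"
    and good: "\<And>s :: nat \<Rightarrow> _. \<forall>i. s i \<in> S \<Longrightarrow> \<exists>i j. i < j \<and> le (s i) (s j)"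
  shows "wqo_class le S"
  unfolding wqo_class_def
proof (intro conjI notI; elim exE conjE)
  fix s :: "nat \<Rightarrow> _"
  assume S: "\<forall>i. s i \<in> S" and desc: "\<forall>i. le (s (Suc i)) (s i) \<and> \<not> le (s i) (s (Suc i))"
  obtain i j where "i < j" and ij: "le (s i) (s j)"
    using good[OF S] by blast
  from \<open>i < j\<close> have "Suc i \<le> j" by simp
  then have "le (s j) (s (Suc i))"
  proof (induction j rule: dec_induct)
    case base show ?case by (rule refl)
  next
    case (step k) then show ?case using desc trans by blast
  qed
  with ij trans desc show False by blast
next
  fix s :: "nat \<Rightarrow> _"
  assume S: "\<forall>i. s i \<in> S" and antichain: "\<forall>i j. i \<noteq> j \<longrightarrow> \<not> le (s i) (s j)"
  obtain i j where "i < j" "le (s i) (s j)"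
    using good[OF S] by blast
  with antichain show False by (blast dest: less_imp_neq)
qed

lemma not_wqo_class_if_antichain:
  fixes s :: "nat \<Rightarrow> 'a"
  assumes "\<forall>i. s i \<in> S" and "\<forall>i j. i \<noteq> j \<longrightarrow> \<not> le (s i) (s j)"
  shows "\<not> wqo_class le S"
proof -
  have "\<exists>s :: nat \<Rightarrow> 'a. (\<forall>i. s i \<in> S) \<and> (\<forall>i j. i \<noteq> j \<longrightarrow> \<not> le (s i) (s j))"
    using assms by (intro exI[of _ s] conjI)
  then show ?thesis
    unfolding wqo_class_def by (elim exE) blast
qed

lemma good_if_finite_upto_iso:
  fixes s :: "nat \<Rightarrow> nat digraph"
  assumes "finite_upto_iso S" and wf: "\<forall>E\<in>S. arcs E \<subseteq> verts E \<times> verts E"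
    and S: "\<forall>i. s i \<in> S"
  shows "\<exists>i j. i < j \<and> himg_le (s i) (s j)"
proof -
  obtain F :: "nat digraph set" where "finite F" and F: "\<forall>E\<in>S. \<exists>G\<in>F. diso E G"
    using assms(1) unfolding finite_upto_iso_def by blast
  have "\<forall>i. \<exists>G. G \<in> F \<and> diso (s i) G"
    using F S by blast
  then obtain g where g: "\<And>i. g i \<in> F \<and> diso (s i) (g i)"
    by metis
  have "\<not> inj g"
    using \<open>finite F\<close> g by (metis finite_subset image_subset_iff infinite_UNIV_nat finite_imageD)
  then obtain i j where "i < j" "g i = g j"
    unfolding inj_def by (metis linorder_neqE_nat)
  then have "diso (s j) (s i)"
    using g diso_trans_converse by metis
  then have "himg_le (s i) (s j)"
    using wf S by (blast intro: diso_imp_himg_le)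
  with \<open>i < j\<close> show ?thesis by blast
qed

lemma finite_upto_iso_if_card_bounded:
  assumes "\<forall>E\<in>S. finite_digraph E \<and> card (verts E) \<le> N"
  shows "finite_upto_iso S"
  unfolding finite_upto_iso_def
proof (intro exI[of _ "Pow {0..<N} \<times> Pow ({0..<N} \<times> {0..<N})"] conjI ballI)
  fix E assume "E \<in> S"
  then obtain G where G: "verts G = {0..<card (verts E)}" "arcs G \<subseteq> verts G \<times> verts G"
    and "diso E G"
    using assms diso_standard_copy by metis
  moreover have "verts G \<subseteq> {0..<N}"
    using G(1) \<open>E \<in> S\<close> assms by auto
  ultimately show "\<exists>G\<in>Pow {0..<N} \<times> Pow ({0..<N} \<times> {0..<N}). diso E G"
    by (intro bexI[of _ G]) (auto simp: verts_def arcs_def mem_Times_iff)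
qed simp

lemma wqo_class_himg_le_if_finite_upto_iso:
  assumes "finite_upto_iso S" and "\<forall>E\<in>S. arcs E \<subseteq> verts E \<times> verts E"
  shows "wqo_class himg_le S"
  using himg_le_refl himg_le_trans good_if_finite_upto_iso[OF assms] by (rule wqo_class_if_good)

section \<open>Complete digraphs\<close>

lemma diso_complete_digraph_iff:
  assumes "finite_digraph D"
  shows "(\<exists>n\<ge>1. diso D (complete_digraph n)) \<longleftrightarrow> verts D \<noteq> {} \<and> arcs D = verts D \<times> verts D"
proof
  assume "\<exists>n\<ge>1. diso D (complete_digraph n)"
  then obtain n :: nat and f where "n \<ge> 1" and bij: "bij_betw f (verts D) {1..n}"
    and arcs_iff: "\<forall>x\<in>verts D. \<forall>y\<in>verts D. (x, y) \<in> arcs D \<longleftrightarrow> (f x, f y) \<in> {1..n} \<times> {1..n}"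
    unfolding diso_def complete_digraph_def verts_def arcs_def by auto
  have "verts D \<noteq> {}"
    using bij \<open>n \<ge> 1\<close> by (auto simp: bij_betw_def)
  moreover have "arcs D = verts D \<times> verts D"
    using assms arcs_iff bij_betwE[OF bij] by (auto simp: finite_digraph_def)
  ultimately show "verts D \<noteq> {} \<and> arcs D = verts D \<times> verts D" ..
next
  assume complete: "verts D \<noteq> {} \<and> arcs D = verts D \<times> verts D"
  define n where "n = card (verts D)"
  have "finite (verts D)"
    using assms by (simp add: finite_digraph_def)
  then obtain h where h: "bij_betw h (verts D) {1..n}"
    using finite_same_card_bij[of "verts D" "{1..n}"] unfolding n_def by force
  have "map_prod h h ` arcs D = {1..n} \<times> {1..n}"
    using complete bij_betw_imp_surj_on[OF h] by (simp add: map_prod_surj_on)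
  then have "diso D (complete_digraph n)"
    using diso_image_digraph[OF _ h] complete by (simp add: complete_digraph_def)
  moreover have "n \<ge> 1"
    unfolding n_def using complete \<open>finite (verts D)\<close> by (simp add: Suc_le_eq card_gt_0_iff)
  ultimately show "\<exists>n\<ge>1. diso D (complete_digraph n)" by blast
qed

lemma himg_le_complete_if_card_le:
  assumes "finite_digraph D" "finite_digraph E"
    and complete: "verts D \<noteq> {}" "arcs D = verts D \<times> verts D"
    and "card (verts D) \<le> card (verts E)"
  shows "himg_le D E"
proof -
  have "\<exists>f. inj_on f (verts D) \<and> f ` verts D \<subseteq> verts E"
    using card_le_inj[of "verts D" "verts E"] assms(1,2,5) unfolding finite_digraph_def by blast
  then obtain g where g: "g ` verts E = verts D"
    unfolding inj_on_iff_surj[OF complete(1)] by blast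
  have "dhom g E D"
    using g complete(2) \<open>finite_digraph E\<close> unfolding dhom_def finite_digraph_def by blast
  with g show ?thesis
    unfolding himg_le_def by blast
qed

lemma card_lt_if_mem_Av_complete:
  assumes "finite_digraph D" "verts D \<noteq> {}" "arcs D = verts D \<times> verts D"
    and "E \<in> Av D"
  shows "card (verts E) < card (verts D)"
  using assms himg_le_complete_if_card_le[of D E] unfolding Av_def by force

section \<open>Two infinite antichains\<close>

definition complete_irrefl_digraph :: "nat \<Rightarrow> nat digraph" where
  "complete_irrefl_digraph n = ({0..<n}, {(i, j). i < n \<and> j < n \<and> i \<noteq> j})"

text \<open>The complement of the directed cycle \<open>0 \<rightarrow> 1 \<rightarrow> \<dots> \<rightarrow> n - 1 \<rightarrow> 0\<close>; for \<open>n \<ge> 2\<close> it has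
  a loop at every vertex.\<close>
definition cycle_complement :: "nat \<Rightarrow> nat digraph" where
  "cycle_complement n = ({0..<n}, {(i, j). i < n \<and> j < n \<and> j \<noteq> Suc i mod n})"

lemma finite_digraph_complete_irrefl_digraph: "finite_digraph (complete_irrefl_digraph n)"
  by (auto simp: finite_digraph_def complete_irrefl_digraph_def verts_def arcs_def)

lemma finite_digraph_cycle_complement: "finite_digraph (cycle_complement n)"
  by (auto simp: finite_digraph_def cycle_complement_def verts_def arcs_def)

lemma himg_le_complete_irrefl_digraph_imp_eq:
  assumes "himg_le (complete_irrefl_digraph a) (complete_irrefl_digraph b)"
  shows "a = b"
proof -
  obtain f where hom: "dhom f (complete_irrefl_digraph b) (complete_irrefl_digraph a)"
    and onto: "f ` {0..<b} = {0..<a}"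
    using assms unfolding himg_le_def complete_irrefl_digraph_def verts_def by auto
  have "inj_on f {0..<b}"
  proof (rule inj_onI, rule ccontr)
    fix u w assume "u \<in> {0..<b}" "w \<in> {0..<b}" "u \<noteq> w"
    then have "(f u, f w) \<in> arcs (complete_irrefl_digraph a)"
      using hom unfolding dhom_def by (simp add: complete_irrefl_digraph_def arcs_def)
    then show "f u = f w \<Longrightarrow> False"
      by (simp add: complete_irrefl_digraph_def arcs_def)
  qed
  then show ?thesis
    using card_image[of f "{0..<b}"] onto by simp
qed

text \<open>A non-injective homomorphism \<open>f\<close> with \<open>f u = f w\<close> cannot be surjective: the successor of
  \<open>f u\<close> would need a preimage \<open>z\<close> that is the successor of both \<open>u\<close> and \<open>w\<close>.\<close>
lemma himg_le_cycle_complement_imp_eq: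
  assumes "himg_le (cycle_complement a) (cycle_complement b)"
  shows "a = b"
proof -
  obtain f where hom: "dhom f (cycle_complement b) (cycle_complement a)"
    and onto: "f ` {0..<b} = {0..<a}"
    using assms unfolding himg_le_def cycle_complement_def verts_def by auto
  have succ: "f y = Suc (f x) mod a \<Longrightarrow> y = Suc x mod b" if "x < b" "y < b" for x y
    using hom that unfolding dhom_def cycle_complement_def arcs_def by auto
  have "inj_on f {0..<b}"
  proof (rule inj_onI, rule ccontr)
    fix u w assume u: "u \<in> {0..<b}" and w: "w \<in> {0..<b}" and "f u = f w" "u \<noteq> w"
    have "f u < a"
      using onto u by auto
    then have "Suc (f u) mod a \<in> f ` {0..<b}"
      using onto by simp
    then obtain z where "z < b" "f z = Suc (f u) mod a" by auto
    then have "z = Suc u mod b" "z = Suc w mod b"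
      using succ u w \<open>f u = f w\<close> by auto
    with u w \<open>u \<noteq> w\<close> show False
      by (simp add: mod_Suc split: if_splits)
  qed
  then show ?thesis
    using card_image[of f "{0..<b}"] onto by simp
qed

lemma not_himg_le_complete_irrefl_digraph:
  assumes "verts D = {} \<or> (\<exists>x\<in>verts D. \<exists>y\<in>verts D. x \<noteq> y \<and> (x, y) \<notin> arcs D)" and "n > 0"
  shows "\<not> himg_le D (complete_irrefl_digraph n)"
proof
  assume "himg_le D (complete_irrefl_digraph n)"
  then obtain f where hom: "dhom f (complete_irrefl_digraph n) D" and onto: "f ` {0..<n} = verts D"
    unfolding himg_le_def complete_irrefl_digraph_def verts_def by auto
  then have "(f u, f w) \<in> arcs D" if "u < n" "w < n" "f u \<noteq> f w" for u w
    using that unfolding dhom_def by (auto simp: complete_irrefl_digraph_def arcs_def)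
  with assms show False
    unfolding onto[symmetric] by auto
qed

lemma not_himg_le_cycle_complement:
  assumes "x \<in> verts D" "(x, x) \<notin> arcs D" and "n \<ge> 2"
  shows "\<not> himg_le D (cycle_complement n)"
proof
  assume "himg_le D (cycle_complement n)"
  then obtain f where hom: "dhom f (cycle_complement n) D" and onto: "f ` {0..<n} = verts D"
    unfolding himg_le_def cycle_complement_def verts_def by auto
  obtain u where "u < n" "f u = x"
    using assms(1) unfolding onto[symmetric] by auto
  moreover have "u \<noteq> Suc u mod n"
    using \<open>u < n\<close> \<open>n \<ge> 2\<close> by (simp add: mod_Suc)
  ultimately have "(f u, f u) \<in> arcs D"
    using hom unfolding dhom_def cycle_complement_def arcs_def by auto
  with assms \<open>f u = x\<close> show False by simp
qed

lemma not_wqo_class_Av_if_not_complete: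
  assumes "\<not> (verts D \<noteq> {} \<and> arcs D = verts D \<times> verts D)" and "arcs D \<subseteq> verts D \<times> verts D"
  shows "\<not> wqo_class himg_le (Av D)"
proof (cases "verts D = {} \<or> (\<exists>x\<in>verts D. \<exists>y\<in>verts D. x \<noteq> y \<and> (x, y) \<notin> arcs D)")
  case True
  show ?thesis
  proof (rule not_wqo_class_if_antichain[of "\<lambda>i. complete_irrefl_digraph (Suc i)"])
    show "\<forall>i. complete_irrefl_digraph (Suc i) \<in> Av D"
      using not_himg_le_complete_irrefl_digraph[OF True] finite_digraph_complete_irrefl_digraph
      by (simp add: Av_def)
    show "\<forall>i j. i \<noteq> j \<longrightarrow> \<not> himg_le (complete_irrefl_digraph (Suc i)) (complete_irrefl_digraph (Suc j))"
      using himg_le_complete_irrefl_digraph_imp_eq by blast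
  qed
next
  case False
  then have "arcs D \<noteq> verts D \<times> verts D"
    using assms(1) by blast
  then obtain x y where "x \<in> verts D" "y \<in> verts D" "(x, y) \<notin> arcs D"
    using assms(2) by blast
  moreover from False calculation have "x = y" by blast
  ultimately have x: "x \<in> verts D" "(x, x) \<notin> arcs D" by simp_all
  show ?thesis
  proof (rule not_wqo_class_if_antichain[of "\<lambda>i. cycle_complement (i + 2)"])
    show "\<forall>i. cycle_complement (i + 2) \<in> Av D"
      using not_himg_le_cycle_complement[OF x] finite_digraph_cycle_complement
      by (simp add: Av_def)
    show "\<forall>i j. i \<noteq> j \<longrightarrow> \<not> himg_le (cycle_complement (i + 2)) (cycle_complement (j + 2))"
      using himg_le_cycle_complement_imp_eq by fastforce
  qed
qed

theorem theorem4p2: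
  fixes D :: "nat digraph"
  assumes "finite_digraph D"
  shows "(wqo_class himg_le (Av D) \<longleftrightarrow> (\<exists>n\<ge>1. diso D (complete_digraph n)))
       \<and> ((\<exists>n\<ge>1. diso D (complete_digraph n)) \<longrightarrow> finite_upto_iso (Av D))"
proof (cases "verts D \<noteq> {} \<and> arcs D = verts D \<times> verts D")
  case complete: True
  have "finite_upto_iso (Av D)"
    using card_lt_if_mem_Av_complete[OF assms] complete
    by (intro finite_upto_iso_if_card_bounded[of _ "card (verts D)"]) (auto simp: Av_def less_imp_le)
  moreover have "wqo_class himg_le (Av D)"
    using calculation by (rule wqo_class_himg_le_if_finite_upto_iso) (auto simp: Av_def finite_digraph_def)
  ultimately show ?thesis
    using diso_complete_digraph_iff[OF assms] complete by blast
next
  case False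
  have "\<not> wqo_class himg_le (Av D)"
    using not_wqo_class_Av_if_not_complete[OF False] assms by (simp add: finite_digraph_def)
  moreover have "\<not> (\<exists>n\<ge>1. diso D (complete_digraph n))"
    using diso_complete_digraph_iff[OF assms] False by blast
  ultimately show ?thesis by blast
qed

end
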